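(* Let $V_0$ be a nonlocal vertex algebra such that every $V_0$-module is completely reducible. Regard $V=V_0[[\hbar]]$ as an $\hbar$-adic nonlocal vertex algebra. Then every $V$-module is completely reducible, i.e. for every $V$-module $W$ and every submodule $W'\subseteq W$ there is a submodule $W''\subseteq W$ with $W=W'\oplus W''$.
   Context: Let $\hbar$ be a formal variable. A $\mathbb{C}[[\hbar]]$-module is topologically free if it is of the form $W_0[[\hbar]]$ for a complex vector space $W_0$. An ordinary nonlocal vertex algebra $V_0$ makes $V_0[[\hbar]]$ an $\hbar$-adic nonlocal vertex algebra by $\mathbb{C}[[\hbar]]$-linear extension. A module over an $\hbar$-adic nonlocal vertex algebra is by definition topologically free. For a $\mathbb{C}[[\hbar]]$-submodule $U$ of a topologically free module $W$, set $[U]=\{w\in W:\hbar^n w\in U\text{ for some }n\ge 1\}$ and let $\overline{U}$ be its $\hbar$-adic closure. Convention: a submodule of a module $W$ over an $\hbar$-adic nonlocal vertex algebra $V$ is a $\mathbb{C}[[\hbar]]$-submodule $W_1$ stable under all operators $u_n$ ($u\in V$) such that $\overline{W_1}=W_1$ and $[W_1]=W_1$. A $V_0$-module is completely reducible if every submodule has a complementary submodule. *)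

theory Defs
  imports Complex_Main "HOL-Library.Function_Algebras"
begin

text \<open>A vertex operator Y(u,x)w = sum_n u_n w x^(-n-1) is encoded as
  Y u w n = u_n w, for n an integer.  Scalars are complex numbers, given
  by an explicit scalar multiplication sc.\<close>

definition fsum :: "(nat \<Rightarrow> 'a::comm_monoid_add) \<Rightarrow> 'a" where
  "fsum f = sum f {j. f j \<noteq> 0}"

definition lsubspace :: "(complex \<Rightarrow> 'a \<Rightarrow> 'a) \<Rightarrow> 'a::ab_group_add set \<Rightarrow> bool" where
  "lsubspace sc S \<longleftrightarrow> 0 \<in> S \<and> (\<forall>a\<in>S. \<forall>b\<in>S. a + b \<in> S) \<and> (\<forall>c. \<forall>a\<in>S. sc c a \<in> S)"

text \<open>Coefficient of x0^p x2^q in (x0+x2)^l Y_W(u,x0+x2) Y_W(v,x2) w,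
  where (x0+x2)^k is expanded in nonnegative powers of x2.\<close>
definition wa_lhs ::
  "(complex \<Rightarrow> 'w \<Rightarrow> 'w) \<Rightarrow> ('v \<Rightarrow> 'w \<Rightarrow> int \<Rightarrow> 'w) \<Rightarrow> 'v \<Rightarrow> 'v \<Rightarrow> 'w
    \<Rightarrow> nat \<Rightarrow> int \<Rightarrow> int \<Rightarrow> 'w::ab_group_add" where
  "wa_lhs scW YW u v w l p q =
     fsum (\<lambda>j. scW ((of_int (p + int j)) gchoose j)
                  (YW u (YW v w (int j - q - 1)) (int l - 1 - int j - p)))"

text \<open>Coefficient of x0^p x2^q in (x0+x2)^l Y_W(Y(u,x0)v,x2) w.\<close>
definition wa_rhs ::
  "(complex \<Rightarrow> 'w \<Rightarrow> 'w) \<Rightarrow> ('v \<Rightarrow> 'v \<Rightarrow> int \<Rightarrow> 'v) \<Rightarrow> ('v \<Rightarrow> 'w \<Rightarrow> int \<Rightarrow> 'w)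
    \<Rightarrow> 'v \<Rightarrow> 'v \<Rightarrow> 'w \<Rightarrow> nat \<Rightarrow> int \<Rightarrow> int \<Rightarrow> 'w::ab_group_add" where
  "wa_rhs scW YV YW u v w l p q =
     (\<Sum>i\<le>l. scW (of_nat (l choose i)) (YW (YV u v (int l - int i - 1 - p)) w (int i - q - 1)))"

definition nlva_module ::
  "(complex \<Rightarrow> 'v \<Rightarrow> 'v::ab_group_add) \<Rightarrow> (complex \<Rightarrow> 'w \<Rightarrow> 'w::ab_group_add) \<Rightarrow> 'v set \<Rightarrow> ('v \<Rightarrow> 'v \<Rightarrow> int \<Rightarrow> 'v) \<Rightarrow> 'v
    \<Rightarrow> 'w set \<Rightarrow> ('v \<Rightarrow> 'w \<Rightarrow> int \<Rightarrow> 'w) \<Rightarrow> bool" where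
  "nlva_module scV scW V YV vac W YW \<longleftrightarrow>
     lsubspace scW W \<and> vac \<in> V \<and>
     (\<forall>u\<in>V. \<forall>w\<in>W. \<forall>n. YW u w n \<in> W) \<and>
     (\<forall>u\<in>V. \<forall>u'\<in>V. \<forall>w\<in>W. \<forall>n. YW (u + u') w n = YW u w n + YW u' w n) \<and>
     (\<forall>c. \<forall>u\<in>V. \<forall>w\<in>W. \<forall>n. YW (scV c u) w n = scW c (YW u w n)) \<and>
     (\<forall>u\<in>V. \<forall>w\<in>W. \<forall>w'\<in>W. \<forall>n. YW u (w + w') n = YW u w n + YW u w' n) \<and>
     (\<forall>c. \<forall>u\<in>V. \<forall>w\<in>W. \<forall>n. YW u (scW c w) n = scW c (YW u w n)) \<and>
     (\<forall>u\<in>V. \<forall>w\<in>W. \<exists>N. \<forall>n\<ge>N. YW u w n = 0) \<and>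
     (\<forall>w\<in>W. \<forall>n. YW vac w n = (if n = -1 then w else 0)) \<and>
     (\<forall>u\<in>V. \<forall>v\<in>V. \<forall>w\<in>W. \<exists>l. \<forall>p q.
         wa_lhs scW YW u v w l p q = wa_rhs scW YV YW u v w l p q)"

definition nlva ::
  "(complex \<Rightarrow> 'v \<Rightarrow> 'v) \<Rightarrow> 'v::ab_group_add set \<Rightarrow> ('v \<Rightarrow> 'v \<Rightarrow> int \<Rightarrow> 'v) \<Rightarrow> 'v \<Rightarrow> bool" where
  "nlva sc V Y vac \<longleftrightarrow>
     lsubspace sc V \<and> nlva_module sc sc V Y vac V Y \<and>
     (\<forall>u\<in>V. (\<forall>n\<ge>0. Y u vac n = 0) \<and> Y u vac (-1) = u)"

definition nlva_submodule ::
  "(complex \<Rightarrow> 'w \<Rightarrow> 'w) \<Rightarrow> 'v set \<Rightarrow> ('v \<Rightarrow> 'w \<Rightarrow> int \<Rightarrow> 'w) \<Rightarrow> 'w::ab_group_add set \<Rightarrow> 'w set \<Rightarrow> bool" where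
  "nlva_submodule scW V YW W W1 \<longleftrightarrow>
     lsubspace scW W1 \<and> W1 \<subseteq> W \<and> (\<forall>u\<in>V. \<forall>w\<in>W1. \<forall>n. YW u w n \<in> W1)"

definition completely_reducible ::
  "(complex \<Rightarrow> 'w \<Rightarrow> 'w) \<Rightarrow> 'v set \<Rightarrow> ('v \<Rightarrow> 'w \<Rightarrow> int \<Rightarrow> 'w) \<Rightarrow> 'w::ab_group_add set \<Rightarrow> bool" where
  "completely_reducible scW V YW W \<longleftrightarrow>
     (\<forall>W1. nlva_submodule scW V YW W W1 \<longrightarrow>
        (\<exists>W2. nlva_submodule scW V YW W W2 \<and> W1 \<inter> W2 = {0} \<and>
              W = {a + b | a b. a \<in> W1 \<and> b \<in> W2}))"

section \<open>h-adic objects: W0[[h]] is encoded as nat => W0 (coefficient of h^k)\<close>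

definition pscale :: "(complex \<Rightarrow> 'a \<Rightarrow> 'a) \<Rightarrow> complex \<Rightarrow> (nat \<Rightarrow> 'a) \<Rightarrow> nat \<Rightarrow> 'a" where
  "pscale sc c w = (\<lambda>i. sc c (w i))"

definition hact :: "(complex \<Rightarrow> 'a \<Rightarrow> 'a) \<Rightarrow> (nat \<Rightarrow> complex) \<Rightarrow> (nat \<Rightarrow> 'a) \<Rightarrow> nat \<Rightarrow> 'a::comm_monoid_add" where
  "hact sc f w = (\<lambda>k. \<Sum>i\<le>k. sc (f i) (w (k - i)))"

definition hpow :: "nat \<Rightarrow> (nat \<Rightarrow> 'a) \<Rightarrow> nat \<Rightarrow> 'a::zero" where
  "hpow n w = (\<lambda>i. if i < n then 0 else w (i - n))"

text \<open>canonical representative of the class of w modulo h^k\<close>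
definition trunc :: "nat \<Rightarrow> (nat \<Rightarrow> 'a) \<Rightarrow> nat \<Rightarrow> 'a::zero" where
  "trunc k w = (\<lambda>i. if i < k then w i else 0)"

definition hYV :: "('v \<Rightarrow> 'v \<Rightarrow> int \<Rightarrow> 'v) \<Rightarrow> (nat \<Rightarrow> 'v) \<Rightarrow> (nat \<Rightarrow> 'v) \<Rightarrow> int \<Rightarrow> nat \<Rightarrow> 'v::comm_monoid_add" where
  "hYV Y0 u v n = (\<lambda>k. \<Sum>a\<le>k. Y0 (u a) (v (k - a)) n)"

definition hvac :: "'v \<Rightarrow> nat \<Rightarrow> 'v::zero" where
  "hvac vac0 = (\<lambda>i. if i = 0 then vac0 else 0)"

definition hbelow :: "nat \<Rightarrow> (nat \<Rightarrow> 'a::zero) set" where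
  "hbelow k = {w. \<forall>i\<ge>k. w i = 0}"

text \<open>A module for the h-adic nonlocal vertex algebra V0[[h]] on the topologically
  free module W0[[h]]: a C[[h]]-bilinear YW such that for every k,
  W/h^kW is a V/h^kV-module (Li's definition).\<close>
definition hadic_module ::
  "(complex \<Rightarrow> 'v \<Rightarrow> 'v::ab_group_add) \<Rightarrow> (complex \<Rightarrow> 'w \<Rightarrow> 'w::ab_group_add) \<Rightarrow> ('v \<Rightarrow> 'v \<Rightarrow> int \<Rightarrow> 'v) \<Rightarrow> 'v
    \<Rightarrow> ((nat \<Rightarrow> 'v) \<Rightarrow> (nat \<Rightarrow> 'w) \<Rightarrow> int \<Rightarrow> (nat \<Rightarrow> 'w)) \<Rightarrow> bool" where
  "hadic_module sc0V sc0W Y0 vac0 YW \<longleftrightarrow>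
     (\<forall>u u' w n. YW (u + u') w n = YW u w n + YW u' w n) \<and>
     (\<forall>f u w n. YW (hact sc0V f u) w n = hact sc0W f (YW u w n)) \<and>
     (\<forall>u w w' n. YW u (w + w') n = YW u w n + YW u w' n) \<and>
     (\<forall>f u w n. YW u (hact sc0W f w) n = hact sc0W f (YW u w n)) \<and>
     (\<forall>k. nlva_module (pscale sc0V) (pscale sc0W)
            (hbelow k) (\<lambda>u v n. trunc k (hYV Y0 u v n)) (trunc k (hvac vac0))
            (hbelow k) (\<lambda>u w n. trunc k (YW u w n)))"

definition hclosure :: "(nat \<Rightarrow> 'a::zero) set \<Rightarrow> (nat \<Rightarrow> 'a) set" where
  "hclosure U = {w. \<forall>k. \<exists>w1\<in>U. trunc k w = trunc k w1}"

definition hsat :: "(nat \<Rightarrow> 'a::zero) set \<Rightarrow> (nat \<Rightarrow> 'a) set" where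
  "hsat U = {w. \<exists>n\<ge>1. hpow n w \<in> U}"

definition hsubmodule ::
  "(complex \<Rightarrow> 'w \<Rightarrow> 'w) \<Rightarrow> ((nat \<Rightarrow> 'v) \<Rightarrow> (nat \<Rightarrow> 'w) \<Rightarrow> int \<Rightarrow> (nat \<Rightarrow> 'w))
     \<Rightarrow> (nat \<Rightarrow> 'w::ab_group_add) set \<Rightarrow> bool" where
  "hsubmodule sc0W YW W1 \<longleftrightarrow>
     0 \<in> W1 \<and> (\<forall>a\<in>W1. \<forall>b\<in>W1. a + b \<in> W1) \<and> (\<forall>f. \<forall>a\<in>W1. hact sc0W f a \<in> W1) \<and>
     (\<forall>u. \<forall>w\<in>W1. \<forall>n. YW u w n \<in> W1) \<and>
     hclosure W1 = W1 \<and> hsat W1 = W1"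

definition hadic_completely_reducible ::
  "(complex \<Rightarrow> 'w \<Rightarrow> 'w::ab_group_add) \<Rightarrow> ((nat \<Rightarrow> 'v) \<Rightarrow> (nat \<Rightarrow> 'w) \<Rightarrow> int \<Rightarrow> (nat \<Rightarrow> 'w)) \<Rightarrow> bool" where
  "hadic_completely_reducible sc0W YW \<longleftrightarrow>
     (\<forall>W1. hsubmodule sc0W YW W1 \<longrightarrow>
        (\<exists>W2. hsubmodule sc0W YW W2 \<and> W1 \<inter> W2 = {0} \<and>
              (UNIV :: (nat \<Rightarrow> 'w) set) = {a + b | a b. a \<in> W1 \<and> b \<in> W2}))"

end

theory Submission
  imports Defs
begin

text \<open>Let W_k = W/h^k W, modelled by the sequences vanishing from index k. Through the
  constant series V_0 \<subseteq> V it is a V_0-module, and N_k denotes the image of W_1 in it. Choose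
  inductively V_0-submodules C_k of W_k that are stable under \<complex>[[h]], complement N_k, and such
  that truncation maps C_(k+1) into C_k. Given C_k, let D be its preimage in W_(k+1) and T the part
  of N_(k+1) divisible by h^k. By hypothesis the V_0-submodule T + hD has a V_0-complement R, and
  C_(k+1) = hD + (R \<inter> D) is h-stable because h(R \<inter> D) \<subseteq> hD; it meets N_(k+1) trivially because
  T \<inter> hD = 0, which is where [W_1] = W_1 enters. The inverse limit W_2 of the C_k complements W_1:
  the decomposition W = W_1 + W_2 uses that W_1 is closed, and W_2 is saturated because W_1 is
  and W_1 \<inter> W_2 = 0.\<close>

lemma trunc_add: "trunc k (a + b) = trunc k a + trunc k (b::nat \<Rightarrow> 'a::monoid_add)"
  by (auto simp: trunc_def)

lemma trunc_diff: "trunc k (a - b) = trunc k a - trunc k (b::nat \<Rightarrow> 'a::group_add)"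
  by (auto simp: trunc_def)

lemma trunc_zero [simp]: "trunc k 0 = 0"
  by (auto simp: trunc_def)

lemma trunc_0 [simp]: "trunc 0 x = 0"
  by (auto simp: trunc_def)

lemma trunc_trunc: "k \<le> n \<Longrightarrow> trunc k (trunc n x) = trunc k x"
  by (auto simp: trunc_def)

lemma hbelow_iff_trunc: "x \<in> hbelow k \<longleftrightarrow> trunc k x = x"
  by (auto simp: trunc_def hbelow_def fun_eq_iff)

lemma trunc_in_hbelow [simp]: "trunc k x \<in> hbelow k"
  by (auto simp: trunc_def hbelow_def)

lemma hbelow_0: "hbelow 0 = {0}"
  by (auto simp: hbelow_def)

lemma trunc_hpow: "trunc k (hpow k x) = 0"
  by (auto simp: trunc_def hpow_def)

lemma trunc_add_hpow_shift: "x = trunc k x + hpow k (\<lambda>i. x (i + k))"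
  for x :: "nat \<Rightarrow> 'a::monoid_add"
  by (auto simp: trunc_def hpow_def fun_eq_iff)

lemma trunc_Suc_hpow_1: "trunc (Suc k) (hpow 1 x) = hpow 1 (trunc k x)"
  by (auto simp: trunc_def hpow_def fun_eq_iff)

lemma hpow_add: "hpow n (a + b) = hpow n a + hpow n (b::nat \<Rightarrow> 'a::monoid_add)"
  by (auto simp: hpow_def fun_eq_iff)

lemma hpow_eq_0_iff: "hpow n x = 0 \<longleftrightarrow> x = 0"
proof
  assume "hpow n x = 0"
  then have "hpow n x (i + n) = 0" for i
    by simp
  then show "x = 0"
    by (auto simp: hpow_def fun_eq_iff)
qed (auto simp: hpow_def fun_eq_iff)

lemma trunc_inject: "(\<And>k. trunc k x = trunc k y) \<Longrightarrow> x = y"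
proof
  fix i
  assume "\<And>k. trunc k x = trunc k y"
  then have "trunc (Suc i) x i = trunc (Suc i) y i"
    by simp
  then show "x i = y i"
    by (simp add: trunc_def)
qed

lemma trunc_compatible:
  assumes "\<And>k. trunc k (xs (Suc k)) = xs k" and "\<And>k. xs k \<in> hbelow k"
  shows "k \<le> j \<Longrightarrow> trunc k (xs j) = xs k"
proof (induction j rule: dec_induct)
  case base
  then show ?case
    using assms(2) hbelow_iff_trunc by blast
next
  case (step j)
  then show ?case
    using assms(1)[of j] trunc_trunc[of k j] by metis
qed

lemma trunc_limit_exists:
  assumes "\<And>k. trunc k (xs (Suc k)) = xs k" and "\<And>k. xs k \<in> hbelow k"
  shows "\<exists>x. \<forall>k. trunc k x = xs k"
proof (intro exI allI)
  fix k
  show "trunc k (\<lambda>i. xs (Suc i) i) = xs k"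
  proof
    fix i
    show "trunc k (\<lambda>i. xs (Suc i) i) i = xs k i"
    proof (cases "i < k")
      case True
      then have "trunc (Suc i) (xs k) = xs (Suc i)"
        using trunc_compatible[OF assms] by simp
      then have "xs (Suc i) i = xs k i"
        by (metis lessI trunc_def)
      then show ?thesis
        using True by (simp add: trunc_def)
    next
      case False
      then show ?thesis
        using assms(2)[of k] by (simp add: trunc_def hbelow_def)
    qed
  qed
qed

definition ssum :: "'a::plus set \<Rightarrow> 'a set \<Rightarrow> 'a set" where
  "ssum A B = {a + b | a b. a \<in> A \<and> b \<in> B}"

lemma lsubspace_zero: "lsubspace sc A \<Longrightarrow> 0 \<in> A"
  by (simp add: lsubspace_def)

lemma lsubspace_add: "lsubspace sc A \<Longrightarrow> a \<in> A \<Longrightarrow> b \<in> A \<Longrightarrow> a + b \<in> A"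
  by (simp add: lsubspace_def)

lemma lsubspace_scale: "lsubspace sc A \<Longrightarrow> a \<in> A \<Longrightarrow> sc c a \<in> A"
  by (simp add: lsubspace_def)

lemma lsubspace_Int: "lsubspace sc A \<Longrightarrow> lsubspace sc B \<Longrightarrow> lsubspace sc (A \<inter> B)"
  by (simp add: lsubspace_def)

lemma lsubspace_image:
  assumes "lsubspace sc A" and "\<And>a b. F (a + b) = F a + F b" and "\<And>c a. F (sc c a) = sc c (F a)"
  shows "lsubspace sc (F ` A)"
  unfolding lsubspace_def
proof (intro conjI ballI allI)
  have "F 0 = 0"
    using assms(2)[of 0 0] by simp
  then show "0 \<in> F ` A"
    using assms(1) unfolding lsubspace_def by (metis image_eqI)
next
  fix x y
  assume "x \<in> F ` A" "y \<in> F ` A"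
  then show "x + y \<in> F ` A"
    using assms(1,2) unfolding lsubspace_def by (auto simp flip: assms(2))
next
  fix c x
  assume "x \<in> F ` A"
  then show "sc c x \<in> F ` A"
    using assms(1,3) unfolding lsubspace_def by (auto simp flip: assms(3))
qed

lemma lsubspace_ssum:
  assumes "lsubspace sc A" and "lsubspace sc B" and "\<And>c a b. sc c (a + b) = sc c a + sc c b"
  shows "lsubspace sc (ssum A B)"
  unfolding lsubspace_def
proof (intro conjI ballI allI)
  have "0 + 0 \<in> ssum A B"
    using assms(1,2) unfolding ssum_def lsubspace_def by blast
  then show "0 \<in> ssum A B"
    by simp
next
  fix x y
  assume "x \<in> ssum A B" "y \<in> ssum A B"
  then obtain a b a' b' where "x = a + b" "y = a' + b'" "a \<in> A" "b \<in> B" "a' \<in> A" "b' \<in> B"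
    unfolding ssum_def by blast
  moreover have "x + y = (a + a') + (b + b')"
    using calculation by (simp add: algebra_simps)
  ultimately show "x + y \<in> ssum A B"
    using assms(1,2) unfolding ssum_def lsubspace_def by blast
next
  fix c x
  assume "x \<in> ssum A B"
  then obtain a b where "x = a + b" "a \<in> A" "b \<in> B"
    unfolding ssum_def by blast
  moreover have "sc c a \<in> A" "sc c b \<in> B"
    using calculation assms(1,2) unfolding lsubspace_def by auto
  ultimately show "sc c x \<in> ssum A B"
    unfolding ssum_def using assms(3) by blast
qed

lemma ssum_closed:
  assumes "\<And>a b. F (a + b) = F a + F b" and "\<And>a. a \<in> A \<Longrightarrow> F a \<in> A" and "\<And>b. b \<in> B \<Longrightarrow> F b \<in> B"
    and "x \<in> ssum A B"
  shows "F x \<in> ssum A B"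
  using assms unfolding ssum_def by (smt (verit) mem_Collect_eq)

definition hmon :: "nat \<Rightarrow> nat \<Rightarrow> complex" where
  "hmon j = (\<lambda>i. if i = j then 1 else 0)"

definition hconst :: "complex \<Rightarrow> nat \<Rightarrow> complex" where
  "hconst c = (\<lambda>i. if i = 0 then c else 0)"

locale complex_module = module sc for sc :: "complex \<Rightarrow> 'b::ab_group_add \<Rightarrow> 'b"
begin

lemma hact_hmon: "hact sc (hmon j) x = hpow j x"
proof
  fix k
  show "hact sc (hmon j) x k = hpow j x k"
  proof (cases "j \<le> k")
    case True
    have "(\<Sum>i\<le>k. sc (hmon j i) (x (k - i))) = (\<Sum>i\<in>{j}. sc (hmon j i) (x (k - i)))"
      by (rule sum.mono_neutral_right) (use True in \<open>auto simp: hmon_def\<close>)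
    then show ?thesis
      using True by (simp add: hact_def hpow_def hmon_def)
  qed (simp add: hact_def hpow_def hmon_def)
qed

lemma hact_hconst: "hact sc (hconst c) x = pscale sc c x"
proof
  fix k
  have "(\<Sum>i\<le>k. sc (hconst c i) (x (k - i))) = (\<Sum>i\<in>{0}. sc (hconst c i) (x (k - i)))"
    by (rule sum.mono_neutral_right) (auto simp: hconst_def)
  then show "hact sc (hconst c) x k = pscale sc c x k"
    by (simp add: hact_def pscale_def hconst_def)
qed

lemma hact_add: "hact sc f (a + b) = hact sc f a + hact sc f b"
  by (auto simp: hact_def fun_eq_iff scale_right_distrib sum.distrib)

lemma hact_pscale: "hact sc f (pscale sc c x) = pscale sc c (hact sc f x)"
  by (auto simp: hact_def pscale_def fun_eq_iff scale_sum_right mult.commute)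

lemma trunc_hact: "trunc k (hact sc f x) = trunc k (hact sc f (trunc k x))"
  by (auto simp: trunc_def hact_def fun_eq_iff intro!: sum.cong)

lemma pscale_add: "pscale sc c (a + b) = pscale sc c a + pscale sc c b"
  by (auto simp: pscale_def scale_right_distrib)

lemma trunc_pscale: "trunc k (pscale sc c x) = pscale sc c (trunc k x)"
  by (auto simp: trunc_def pscale_def)

lemma pscale_minus_one: "pscale sc (-1) x = - x"
  by (auto simp: pscale_def)

lemma lsubspace_diff: "lsubspace (pscale sc) A \<Longrightarrow> a \<in> A \<Longrightarrow> b \<in> A \<Longrightarrow> a - b \<in> A"
  using lsubspace_add[of "pscale sc" A a "pscale sc (-1) b"] lsubspace_scale[of "pscale sc" A b "-1"]
  by (simp add: pscale_minus_one)

lemma lsubspace_pscale_ssum: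
  "lsubspace (pscale sc) A \<Longrightarrow> lsubspace (pscale sc) B \<Longrightarrow> lsubspace (pscale sc) (ssum A B)"
  by (rule lsubspace_ssum) (auto simp: pscale_add)

lemma lsubspace_zero_set: "lsubspace (pscale sc) {0}"
  by (simp add: lsubspace_def pscale_def fun_eq_iff)

lemma lsubspace_trunc_preimage:
  assumes "lsubspace (pscale sc) A" and "lsubspace (pscale sc) B"
  shows "lsubspace (pscale sc) {x \<in> A. trunc k x \<in> B}"
  using assms unfolding lsubspace_def by (simp add: trunc_add trunc_pscale)

text \<open>Splitting f = f(0) + h f' reduces stability under \<complex>[[h]] to stability under scalars and
  under multiplication by h.\<close>
lemma trunc_hact_split:
  assumes "x \<in> hbelow n"
  shows "trunc n (hact sc f x) =
    pscale sc (f 0) x + trunc n (hact sc (hmon 1) (trunc n (hact sc (\<lambda>i. f (Suc i)) x)))"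
proof
  fix i
  have x_high: "\<And>j. j \<ge> n \<Longrightarrow> x j = 0"
    using assms by (auto simp: hbelow_def)
  show "trunc n (hact sc f x) i =
    (pscale sc (f 0) x + trunc n (hact sc (hmon 1) (trunc n (hact sc (\<lambda>i. f (Suc i)) x)))) i"
  proof (cases "i < n")
    case False
    then show ?thesis
      by (simp add: trunc_def pscale_def x_high hact_hmon)
  next
    case True
    show ?thesis
    proof (cases i)
      case 0
      then show ?thesis
        using True unfolding hact_hmon by (simp add: trunc_def pscale_def hpow_def hact_def)
    next
      case (Suc i')
      have "hact sc f x i = sc (f 0) (x i) + (\<Sum>j\<le>i'. sc (f (Suc j)) (x (i' - j)))"
        unfolding hact_def Suc sum.atMost_Suc_shift by simp
      then show ?thesis
        using True Suc unfolding hact_hmon by (simp add: trunc_def pscale_def hpow_def hact_def)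
    qed
  qed
qed

end

locale hadic_module_setting = W: complex_module sc0W + V: complex_module sc0V
  for sc0W :: "complex \<Rightarrow> 'w::ab_group_add \<Rightarrow> 'w" and sc0V :: "complex \<Rightarrow> 'v::ab_group_add \<Rightarrow> 'v" +
  fixes Y0 :: "'v \<Rightarrow> 'v \<Rightarrow> int \<Rightarrow> 'v" and vac0 :: 'v
    and YW :: "(nat \<Rightarrow> 'v) \<Rightarrow> (nat \<Rightarrow> 'w) \<Rightarrow> int \<Rightarrow> (nat \<Rightarrow> 'w)"
  assumes V0_nlva: "nlva sc0V UNIV Y0 vac0"
    and V0_completely_reducible: "\<forall>(M :: (nat \<Rightarrow> 'w) set) YM.
      nlva_module sc0V (pscale sc0W) UNIV Y0 vac0 M YM \<longrightarrow> completely_reducible (pscale sc0W) UNIV YM M"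
    and W_module: "hadic_module sc0V sc0W Y0 vac0 YW"
begin

lemma YW_add_left: "YW (u + u') w n = YW u w n + YW u' w n"
  using W_module by (simp add: hadic_module_def)

lemma YW_add_right: "YW u (w + w') n = YW u w n + YW u w' n"
  using W_module by (simp add: hadic_module_def)

lemma YW_hact_left: "YW (hact sc0V f u) w n = hact sc0W f (YW u w n)"
  using W_module by (simp add: hadic_module_def)

lemma YW_hact_right: "YW u (hact sc0W f w) n = hact sc0W f (YW u w n)"
  using W_module by (simp add: hadic_module_def)

lemma YW_truncated_module:
  "nlva_module (pscale sc0V) (pscale sc0W) (hbelow k) (\<lambda>u v n. trunc k (hYV Y0 u v n))
     (trunc k (hvac vac0)) (hbelow k) (\<lambda>u w n. trunc k (YW u w n))"
  using W_module by (simp add: hadic_module_def)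

lemma YW_zero_left [simp]: "YW 0 w n = 0"
  using YW_add_left[of 0 0 w n] by simp

lemma YW_zero_right [simp]: "YW u 0 n = 0"
  using YW_add_right[of u 0 0 n] by simp

lemma trunc_YW_trunc_right: "trunc k (YW u (trunc k w) m) = trunc k (YW u w m)"
proof -
  have "YW u w m = YW u (trunc k w + hact sc0W (hmon k) (\<lambda>i. w (i + k))) m"
    using trunc_add_hpow_shift[of w k] by (simp add: W.hact_hmon)
  also have "\<dots> = YW u (trunc k w) m + hpow k (YW u (\<lambda>i. w (i + k)) m)"
    by (subst YW_add_right, subst YW_hact_right, simp only: W.hact_hmon)
  finally show ?thesis
    by (simp add: trunc_add trunc_hpow)
qed

lemma trunc_YW_trunc_left: "trunc k (YW (trunc k u) w m) = trunc k (YW u w m)"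
proof -
  have "YW u w m = YW (trunc k u + hact sc0V (hmon k) (\<lambda>i. u (i + k))) w m"
    using trunc_add_hpow_shift[of u k] by (simp add: V.hact_hmon)
  also have "\<dots> = YW (trunc k u) w m + hpow k (YW (\<lambda>i. u (i + k)) w m)"
    by (subst YW_add_left, subst YW_hact_left, simp only: W.hact_hmon)
  finally show ?thesis
    by (simp add: trunc_add trunc_hpow)
qed

lemma Y0_zero_left [simp]: "Y0 0 v n = 0"
proof -
  have "\<forall>u u' w n. Y0 (u + u') w n = Y0 u w n + Y0 u' w n"
    using V0_nlva by (simp add: nlva_def nlva_module_def)
  then have "Y0 (0 + 0) v n = Y0 0 v n + Y0 0 v n"
    by blast
  then show ?thesis
    by simp
qed

lemma Y0_zero_right [simp]: "Y0 u 0 n = 0"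
proof -
  have "\<forall>u w w' n. Y0 u (w + w') n = Y0 u w n + Y0 u w' n"
    using V0_nlva by (simp add: nlva_def nlva_module_def)
  then have "Y0 u (0 + 0) n = Y0 u 0 n + Y0 u 0 n"
    by blast
  then show ?thesis
    by simp
qed

definition Ylevel :: "nat \<Rightarrow> 'v \<Rightarrow> (nat \<Rightarrow> 'w) \<Rightarrow> int \<Rightarrow> (nat \<Rightarrow> 'w)" where
  "Ylevel k u w m = trunc k (YW (hvac u) w m)"

lemma Ylevel_eq_truncated: "Ylevel k u = (\<lambda>w m. trunc k (YW (trunc k (hvac u)) w m))"
  by (simp add: Ylevel_def trunc_YW_trunc_left fun_eq_iff)

lemma trunc_hYV_hvac:
  "trunc k (hYV Y0 (trunc k (hvac u)) (trunc k (hvac v)) n) = trunc k (hvac (Y0 u v n))"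
proof
  fix t
  show "trunc k (hYV Y0 (trunc k (hvac u)) (trunc k (hvac v)) n) t = trunc k (hvac (Y0 u v n)) t"
  proof (cases "t < k")
    case True
    show ?thesis
    proof (cases t)
      case 0
      then show ?thesis
        using True by (simp add: trunc_def hYV_def hvac_def)
    next
      case (Suc t')
      have "(\<Sum>a\<le>t. Y0 (trunc k (hvac u) a) (trunc k (hvac v) (t - a)) n) = 0"
        by (rule sum.neutral) (use Suc in \<open>auto simp: trunc_def hvac_def\<close>)
      then show ?thesis
        using True Suc by (simp add: trunc_def hYV_def hvac_def)
    qed
  qed (simp add: trunc_def)
qed

lemma Ylevel_add_left: "Ylevel k (u + u') w n = Ylevel k u w n + Ylevel k u' w n"
proof -
  have "hvac (u + u') = hvac u + hvac u'"
    by (auto simp: hvac_def fun_eq_iff)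
  then show ?thesis
    by (simp add: Ylevel_def YW_add_left trunc_add)
qed

lemma Ylevel_add_right: "Ylevel k u (w + w') n = Ylevel k u w n + Ylevel k u w' n"
  by (simp add: Ylevel_def YW_add_right trunc_add)

lemma Ylevel_scale_left: "Ylevel k (sc0V c u) w n = pscale sc0W c (Ylevel k u w n)"
proof -
  have "hvac (sc0V c u) = hact sc0V (hconst c) (hvac u)"
    unfolding V.hact_hconst by (auto simp: hvac_def fun_eq_iff pscale_def)
  then show ?thesis
    by (simp add: Ylevel_def YW_hact_left W.hact_hconst W.trunc_pscale)
qed

lemma Ylevel_scale_right: "Ylevel k u (pscale sc0W c w) n = pscale sc0W c (Ylevel k u w n)"
  using YW_hact_right[of "hvac u" "hconst c" w n]
  by (simp add: Ylevel_def W.hact_hconst W.trunc_pscale)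

lemma Ylevel_in_hbelow [simp]: "Ylevel k u x m \<in> hbelow k"
  by (simp add: Ylevel_def)

lemma Ylevel_module: "nlva_module sc0V (pscale sc0W) UNIV Y0 vac0 (hbelow k) (Ylevel k)"
proof -
  let ?YL = "\<lambda>u w n. trunc k (YW u w n)"
  let ?YV = "\<lambda>u v n. trunc k (hYV Y0 u v n)"
  let ?e = "\<lambda>u. trunc k (hvac u)"
  have L: "nlva_module (pscale sc0V) (pscale sc0W) (hbelow k) ?YV (?e vac0) (hbelow k) ?YL"
    by (rule YW_truncated_module)
  have e: "Ylevel k u = ?YL (?e u)" for u
    by (rule Ylevel_eq_truncated)
  have truncation: "\<exists>N. \<forall>n\<ge>N. Ylevel k u w n = 0" if "w \<in> hbelow k" for u w
    using L that unfolding nlva_module_def e by (meson trunc_in_hbelow)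
  have weak_assoc: "\<exists>l. \<forall>p q. wa_lhs (pscale sc0W) (Ylevel k) u v w l p q
      = wa_rhs (pscale sc0W) Y0 (Ylevel k) u v w l p q" if w: "w \<in> hbelow k" for u v w
  proof -
    have "\<forall>u\<in>hbelow k. \<forall>v\<in>hbelow k. \<forall>w\<in>hbelow k. \<exists>l. \<forall>p q.
        wa_lhs (pscale sc0W) ?YL u v w l p q = wa_rhs (pscale sc0W) ?YV ?YL u v w l p q"
      using L unfolding nlva_module_def by blast
    then obtain l where l: "\<forall>p q. wa_lhs (pscale sc0W) ?YL (?e u) (?e v) w l p q
        = wa_rhs (pscale sc0W) ?YV ?YL (?e u) (?e v) w l p q"
      using w trunc_in_hbelow by blast
    show ?thesis
      by (rule exI[of _ l]) (use l in \<open>simp add: wa_lhs_def wa_rhs_def e trunc_hYV_hvac\<close>)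
  qed
  have vacuum: "\<forall>w\<in>hbelow k. \<forall>n. Ylevel k vac0 w n = (if n = -1 then w else 0)"
    using L unfolding nlva_module_def e by simp
  have "lsubspace (pscale sc0W) (hbelow k)"
    using L by (simp add: nlva_module_def)
  then show ?thesis
    unfolding nlva_module_def
    using truncation weak_assoc vacuum
    by (simp add: Ylevel_add_left Ylevel_add_right Ylevel_scale_left Ylevel_scale_right)
qed

lemma hbelow_lsubspace: "lsubspace (pscale sc0W) (hbelow k)"
  using Ylevel_module[of k] by (simp add: nlva_module_def)

end

locale complement_setting = hadic_module_setting sc0W sc0V Y0 vac0 YW
  for sc0W :: "complex \<Rightarrow> 'w::ab_group_add \<Rightarrow> 'w" and sc0V :: "complex \<Rightarrow> 'v::ab_group_add \<Rightarrow> 'v"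
    and Y0 vac0 YW +
  fixes W1 :: "(nat \<Rightarrow> 'w) set"
  assumes W1_submodule: "hsubmodule sc0W YW W1"
begin

definition hmul :: "nat \<Rightarrow> (nat \<Rightarrow> complex) \<Rightarrow> (nat \<Rightarrow> 'w) \<Rightarrow> (nat \<Rightarrow> 'w)" where
  "hmul k f x = trunc k (hact sc0W f x)"

definition W1_level :: "nat \<Rightarrow> (nat \<Rightarrow> 'w) set" where
  "W1_level k = trunc k ` W1"

definition level_complement :: "nat \<Rightarrow> (nat \<Rightarrow> 'w) set \<Rightarrow> bool" where
  "level_complement k C \<longleftrightarrow>
     C \<subseteq> hbelow k \<and> lsubspace (pscale sc0W) C \<and> (\<forall>u. \<forall>w\<in>C. \<forall>m. Ylevel k u w m \<in> C) \<and>
     (\<forall>f. \<forall>x\<in>C. hmul k f x \<in> C) \<and> W1_level k \<inter> C = {0} \<and> hbelow k = ssum (W1_level k) C"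

lemma hmul_Ylevel: "Ylevel k u (hmul k f x) m = hmul k f (Ylevel k u x m)"
proof -
  have "Ylevel k u (hmul k f x) m = trunc k (YW (hvac u) (hact sc0W f x) m)"
    unfolding Ylevel_def hmul_def by (rule trunc_YW_trunc_right)
  also have "\<dots> = hmul k f (Ylevel k u x m)"
    unfolding hmul_def Ylevel_def YW_hact_right by (rule W.trunc_hact)
  finally show ?thesis .
qed

lemma hmul_add: "hmul k f (a + b) = hmul k f a + hmul k f b"
  by (simp add: hmul_def W.hact_add trunc_add)

lemma hmul_pscale: "hmul k f (pscale sc0W c x) = pscale sc0W c (hmul k f x)"
  by (simp add: hmul_def W.hact_pscale W.trunc_pscale)

lemma trunc_hmul: "k \<le> n \<Longrightarrow> trunc k (hmul n f x) = hmul k f (trunc k x)"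
  unfolding hmul_def by (simp add: trunc_trunc flip: W.trunc_hact)

lemma trunc_Ylevel: "k \<le> n \<Longrightarrow> trunc k (Ylevel n u x m) = Ylevel k u (trunc k x) m"
  unfolding Ylevel_def by (simp add: trunc_trunc trunc_YW_trunc_right)

lemma hmul_in_hbelow [simp]: "hmul k f x \<in> hbelow k"
  by (simp add: hmul_def)

lemma hmul_split:
  "x \<in> hbelow n \<Longrightarrow> hmul n f x = pscale sc0W (f 0) x + hmul n (hmon 1) (hmul n (\<lambda>i. f (Suc i)) x)"
  unfolding hmul_def by (rule W.trunc_hact_split)

lemma hmul_hmon_Suc: "hmul (Suc k) (hmon 1) d = trunc (Suc k) (hpow 1 d)"
  by (simp add: hmul_def W.hact_hmon)

lemma W1_zero: "0 \<in> W1"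
  using W1_submodule by (simp add: hsubmodule_def)

lemma W1_add: "a \<in> W1 \<Longrightarrow> b \<in> W1 \<Longrightarrow> a + b \<in> W1"
  using W1_submodule by (simp add: hsubmodule_def)

lemma W1_hact: "a \<in> W1 \<Longrightarrow> hact sc0W f a \<in> W1"
  using W1_submodule by (simp add: hsubmodule_def)

lemma W1_YW: "a \<in> W1 \<Longrightarrow> YW u a n \<in> W1"
  using W1_submodule by (simp add: hsubmodule_def)

lemma W1_closed: "hclosure W1 = W1"
  using W1_submodule by (simp add: hsubmodule_def)

lemma W1_saturated: "hsat W1 = W1"
  using W1_submodule by (simp add: hsubmodule_def)

lemma W1_level_lsubspace: "lsubspace (pscale sc0W) (W1_level k)"
  unfolding lsubspace_def W1_level_def
proof (intro conjI ballI allI)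
  show "0 \<in> trunc k ` W1"
    using W1_zero by force
next
  fix a b
  assume "a \<in> trunc k ` W1" "b \<in> trunc k ` W1"
  then show "a + b \<in> trunc k ` W1"
    using W1_add by (auto simp flip: trunc_add)
next
  fix c a
  assume "a \<in> trunc k ` W1"
  then show "pscale sc0W c a \<in> trunc k ` W1"
    using W1_hact[of _ "hconst c"] by (auto simp: W.hact_hconst simp flip: W.trunc_pscale)
qed

lemma W1_level_subset: "W1_level k \<subseteq> hbelow k"
  by (auto simp: W1_level_def)

lemma W1_level_Ylevel: "x \<in> W1_level k \<Longrightarrow> Ylevel k u x m \<in> W1_level k"
  unfolding W1_level_def Ylevel_def using W1_YW by (auto simp: trunc_YW_trunc_right)

lemma trunc_W1_level: "k \<le> n \<Longrightarrow> x \<in> W1_level n \<Longrightarrow> trunc k x \<in> W1_level k"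
  unfolding W1_level_def by (auto simp: trunc_trunc)

lemma W1_level_divide_h:
  assumes "hmul (Suc k) (hmon 1) d \<in> W1_level (Suc k)"
  shows "trunc k d \<in> W1_level k"
proof -
  obtain w where w: "w \<in> W1" "trunc (Suc k) (hpow 1 d) = trunc (Suc k) w"
    using assms unfolding W1_level_def hmul_hmon_Suc by auto
  have "w 0 = 0"
    using fun_cong[OF w(2), of 0] by (simp add: trunc_def hpow_def)
  then have "hpow 1 (\<lambda>i. w (Suc i)) = w"
    by (auto simp: hpow_def fun_eq_iff not_less)
  then have "(\<lambda>i. w (Suc i)) \<in> hsat W1"
    using w(1) unfolding hsat_def by (metis (mono_tags) le_refl mem_Collect_eq)
  then have "(\<lambda>i. w (Suc i)) \<in> W1"
    using W1_saturated by simp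
  moreover have "trunc k d = trunc k (\<lambda>i. w (Suc i))"
  proof
    fix i
    show "trunc k d i = trunc k (\<lambda>i. w (Suc i)) i"
      using fun_cong[OF w(2), of "Suc i"] by (auto simp: trunc_def hpow_def)
  qed
  ultimately show ?thesis
    by (auto simp: W1_level_def)
qed

lemma level_complement_0: "level_complement 0 {0}"
proof -
  have "W1_level 0 = {0}"
    using W1_zero by (auto simp: W1_level_def)
  moreover note W.lsubspace_zero_set
  moreover have "ssum {0::nat \<Rightarrow> 'w} {0} = {0}"
    by (auto simp: ssum_def)
  ultimately show ?thesis
    unfolding level_complement_def hbelow_0 by (simp add: Ylevel_def hmul_def)
qed

text \<open>Expand u = \<Sum> u_j h^j and use the \<complex>[[h]]-linearity of Y_W in its first argument.\<close>
lemma level_complement_YW_closed: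
  assumes C: "level_complement k C" and x: "x \<in> C"
  shows "trunc k (YW u x m) \<in> C"
proof -
  have C_lsubspace: "lsubspace (pscale sc0W) C"
    and C_Ylevel: "\<And>u w m. w \<in> C \<Longrightarrow> Ylevel k u w m \<in> C"
    and C_hmul: "\<And>f x. x \<in> C \<Longrightarrow> hmul k f x \<in> C"
    using C unfolding level_complement_def by auto
  have "trunc k (YW (trunc j u) x m) \<in> C" for j
  proof (induction j)
    case 0
    then show ?case
      using lsubspace_zero[OF C_lsubspace] by (simp only: trunc_0 YW_zero_left trunc_zero)
  next
    case (Suc j)
    have "trunc (Suc j) u = trunc j u + hact sc0V (hmon j) (hvac (u j))"
      unfolding V.hact_hmon by (auto simp: fun_eq_iff trunc_def hpow_def hvac_def less_Suc_eq)
    then have "trunc k (YW (trunc (Suc j) u) x m) =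
        trunc k (YW (trunc j u) x m) + hmul k (hmon j) (Ylevel k (u j) x m)"
      by (simp add: YW_add_left YW_hact_left trunc_add hmul_def Ylevel_def flip: W.trunc_hact)
    then show ?case
      by (simp only:) (rule lsubspace_add[OF C_lsubspace Suc.IH C_hmul[OF C_Ylevel[OF x]]])
  qed
  then show ?thesis
    by (metis trunc_YW_trunc_left)
qed

end

locale complement_lift = complement_setting sc0W sc0V Y0 vac0 YW W1
  for sc0W :: "complex \<Rightarrow> 'w::ab_group_add \<Rightarrow> 'w" and sc0V :: "complex \<Rightarrow> 'v::ab_group_add \<Rightarrow> 'v"
    and Y0 vac0 YW W1 +
  fixes k :: nat and C :: "(nat \<Rightarrow> 'w) set"
  assumes C_complement: "level_complement k C"
begin

lemma C_lsubspace: "lsubspace (pscale sc0W) C"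
  and C_Ylevel: "x \<in> C \<Longrightarrow> Ylevel k u x m \<in> C"
  and C_hmul: "x \<in> C \<Longrightarrow> hmul k f x \<in> C"
  and W1_level_inter_C: "W1_level k \<inter> C = {0}"
  and C_span: "hbelow k = ssum (W1_level k) C"
  using C_complement unfolding level_complement_def by auto

definition D :: "(nat \<Rightarrow> 'w) set" where
  "D = {x \<in> hbelow (Suc k). trunc k x \<in> C}"

definition T :: "(nat \<Rightarrow> 'w) set" where
  "T = {x \<in> W1_level (Suc k). trunc k x \<in> {0}}"

definition hD :: "(nat \<Rightarrow> 'w) set" where
  "hD = hmul (Suc k) (hmon 1) ` D"

definition S :: "(nat \<Rightarrow> 'w) set" where
  "S = ssum T hD"

definition R :: "(nat \<Rightarrow> 'w) set" where
  "R = (SOME R. nlva_submodule (pscale sc0W) UNIV (Ylevel (Suc k)) (hbelow (Suc k)) R \<and>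
          S \<inter> R = {0} \<and> hbelow (Suc k) = ssum S R)"

definition C_next :: "(nat \<Rightarrow> 'w) set" where
  "C_next = ssum hD (R \<inter> D)"

lemma D_lsubspace: "lsubspace (pscale sc0W) D"
  unfolding D_def by (rule W.lsubspace_trunc_preimage[OF hbelow_lsubspace C_lsubspace])

lemma D_subset: "D \<subseteq> hbelow (Suc k)"
  by (auto simp: D_def)

lemma D_Ylevel: "x \<in> D \<Longrightarrow> Ylevel (Suc k) u x m \<in> D"
  unfolding D_def using trunc_Ylevel[of k "Suc k"] C_Ylevel by auto

lemma D_hmul: "x \<in> D \<Longrightarrow> hmul (Suc k) f x \<in> D"
  unfolding D_def using trunc_hmul[of k "Suc k"] C_hmul by auto

lemma T_lsubspace: "lsubspace (pscale sc0W) T"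
  unfolding T_def by (rule W.lsubspace_trunc_preimage[OF W1_level_lsubspace W.lsubspace_zero_set])

lemma T_subset_W1_level: "T \<subseteq> W1_level (Suc k)"
  by (auto simp: T_def)

lemma T_subset_D: "T \<subseteq> D"
  unfolding T_def D_def using W1_level_subset[of "Suc k"] lsubspace_zero[OF C_lsubspace] by auto

lemma T_Ylevel:
  assumes "x \<in> T"
  shows "Ylevel (Suc k) u x m \<in> T"
proof -
  have "trunc k (Ylevel (Suc k) u x m) = Ylevel k u (trunc k x) m"
    by (rule trunc_Ylevel) simp
  also have "\<dots> = 0"
    using assms by (simp add: T_def Ylevel_def)
  finally show ?thesis
    using assms W1_level_Ylevel by (simp add: T_def)
qed

lemma hD_lsubspace: "lsubspace (pscale sc0W) hD"
  unfolding hD_def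
  by (rule lsubspace_image[where F = "hmul (Suc k) (hmon 1)", OF D_lsubspace hmul_add hmul_pscale])

lemma hD_subset_D: "hD \<subseteq> D"
  unfolding hD_def using D_hmul by auto

lemma hD_Ylevel: "x \<in> hD \<Longrightarrow> Ylevel (Suc k) u x m \<in> hD"
  unfolding hD_def using D_Ylevel by (auto simp: hmul_Ylevel)

lemma S_submodule: "nlva_submodule (pscale sc0W) UNIV (Ylevel (Suc k)) (hbelow (Suc k)) S"
proof -
  have "lsubspace (pscale sc0W) S"
    unfolding S_def by (rule W.lsubspace_pscale_ssum[OF T_lsubspace hD_lsubspace])
  moreover have "S \<subseteq> hbelow (Suc k)"
    unfolding S_def ssum_def using T_subset_D hD_subset_D D_subset lsubspace_add[OF D_lsubspace] by blast
  moreover have "Ylevel (Suc k) u x m \<in> S" if "x \<in> S" for u x m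
    using that unfolding S_def
    by (rule ssum_closed[where F = "\<lambda>x. Ylevel (Suc k) u x m", rotated 3])
      (auto simp: Ylevel_add_right T_Ylevel hD_Ylevel)
  ultimately show ?thesis
    unfolding nlva_submodule_def by blast
qed

lemma R_complement:
  "nlva_submodule (pscale sc0W) UNIV (Ylevel (Suc k)) (hbelow (Suc k)) R"
  "S \<inter> R = {0}" "hbelow (Suc k) = ssum S R"
proof -
  have "completely_reducible (pscale sc0W) UNIV (Ylevel (Suc k)) (hbelow (Suc k))"
    using V0_completely_reducible Ylevel_module by blast
  then have "\<exists>R. nlva_submodule (pscale sc0W) UNIV (Ylevel (Suc k)) (hbelow (Suc k)) R \<and>
      S \<inter> R = {0} \<and> hbelow (Suc k) = ssum S R"
    unfolding completely_reducible_def ssum_def using S_submodule by blast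
  from someI_ex[OF this] show
    "nlva_submodule (pscale sc0W) UNIV (Ylevel (Suc k)) (hbelow (Suc k)) R"
    "S \<inter> R = {0}" "hbelow (Suc k) = ssum S R"
    unfolding R_def by blast+
qed

lemma R_lsubspace: "lsubspace (pscale sc0W) R"
  and R_Ylevel: "x \<in> R \<Longrightarrow> Ylevel (Suc k) u x m \<in> R"
  using R_complement(1) unfolding nlva_submodule_def by auto

lemma C_next_subset_D: "C_next \<subseteq> D"
  unfolding C_next_def ssum_def using hD_subset_D lsubspace_add[OF D_lsubspace] by blast

lemma C_next_lsubspace: "lsubspace (pscale sc0W) C_next"
  unfolding C_next_def
  by (rule W.lsubspace_pscale_ssum[OF hD_lsubspace lsubspace_Int[OF R_lsubspace D_lsubspace]])

lemma C_next_Ylevel: "x \<in> C_next \<Longrightarrow> Ylevel (Suc k) u x m \<in> C_next"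
  unfolding C_next_def
  by (rule ssum_closed[where F = "\<lambda>x. Ylevel (Suc k) u x m", rotated 3])
    (auto simp: Ylevel_add_right hD_Ylevel R_Ylevel D_Ylevel)

lemma C_next_hmul: "x \<in> C_next \<Longrightarrow> hmul (Suc k) f x \<in> C_next"
proof -
  assume x: "x \<in> C_next"
  then have "x \<in> D"
    using C_next_subset_D by blast
  then have "hmul (Suc k) (hmon 1) (hmul (Suc k) (\<lambda>i. f (Suc i)) x) + 0 \<in> C_next"
    unfolding C_next_def ssum_def hD_def
    using D_hmul lsubspace_zero[OF lsubspace_Int[OF R_lsubspace D_lsubspace]] by blast
  moreover have "pscale sc0W (f 0) x \<in> C_next"
    using lsubspace_scale[OF C_next_lsubspace x] .
  ultimately show ?thesis
    using hmul_split[of x "Suc k" f] \<open>x \<in> D\<close> D_subset lsubspace_add[OF C_next_lsubspace]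
    by (auto simp: add.commute)
qed

lemma T_inter_hD: "T \<inter> hD \<subseteq> {0}"
proof
  fix a
  assume a: "a \<in> T \<inter> hD"
  then obtain d where d: "d \<in> D" "a = hmul (Suc k) (hmon 1) d"
    unfolding hD_def by blast
  have "trunc k d \<in> W1_level k"
    using W1_level_divide_h a d by (auto simp: T_def)
  moreover have "trunc k d \<in> C"
    using d by (auto simp: D_def)
  ultimately have "trunc k d = 0"
    using W1_level_inter_C by blast
  then show "a \<in> {0}"
    using d(2) unfolding hmul_hmon_Suc trunc_Suc_hpow_1 by (simp add: hpow_def fun_eq_iff)
qed

lemma W1_level_inter_C_next: "W1_level (Suc k) \<inter> C_next = {0}"
proof
  show "{0} \<subseteq> W1_level (Suc k) \<inter> C_next"
    using lsubspace_zero[OF W1_level_lsubspace] lsubspace_zero[OF C_next_lsubspace] by blast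
next
  show "W1_level (Suc k) \<inter> C_next \<subseteq> {0}"
  proof
    fix y
    assume y: "y \<in> W1_level (Suc k) \<inter> C_next"
    then have "trunc k y \<in> W1_level k \<inter> C"
      using trunc_W1_level[of k "Suc k"] C_next_subset_D by (auto simp: D_def)
    then have yT: "y \<in> T"
      using y W1_level_inter_C by (auto simp: T_def)
    obtain a r where ar: "y = a + r" "a \<in> hD" "r \<in> R" "r \<in> D"
      using y unfolding C_next_def ssum_def by blast
    have "y + pscale sc0W (-1) a \<in> S"
      unfolding S_def ssum_def using yT lsubspace_scale[OF hD_lsubspace ar(2)] by blast
    then have "r \<in> S \<inter> R"
      using ar by (simp add: W.pscale_minus_one)
    then have "r = 0"
      using R_complement(2) by blast
    then show "y \<in> {0}"
      using T_inter_hD ar yT by auto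
  qed
qed

lemma C_next_span: "hbelow (Suc k) = ssum (W1_level (Suc k)) C_next"
proof
  show "ssum (W1_level (Suc k)) C_next \<subseteq> hbelow (Suc k)"
    unfolding ssum_def using W1_level_subset C_next_subset_D D_subset lsubspace_add[OF hbelow_lsubspace]
    by blast
next
  show "hbelow (Suc k) \<subseteq> ssum (W1_level (Suc k)) C_next"
  proof
    fix x :: "nat \<Rightarrow> 'w"
    assume x: "x \<in> hbelow (Suc k)"
    obtain a c where ac: "trunc k x = a + c" "a \<in> W1_level k" "c \<in> C"
      using C_span trunc_in_hbelow unfolding ssum_def by blast
    then obtain w where w: "w \<in> W1" "a = trunc k w"
      by (auto simp: W1_level_def)
    define y where "y = trunc (Suc k) w"
    have y: "y \<in> W1_level (Suc k)"
      using w by (auto simp: W1_level_def y_def)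
    have "x - y \<in> D"
      using ac w W.lsubspace_diff[OF hbelow_lsubspace x] W1_level_subset y
      by (auto simp: D_def y_def trunc_diff trunc_trunc)
    then obtain s r where sr: "x - y = s + r" "s \<in> S" "r \<in> R"
      using R_complement(3) D_subset unfolding ssum_def by blast
    obtain t b where tb: "s = t + b" "t \<in> T" "b \<in> hD"
      using sr(2) unfolding S_def ssum_def by blast
    have "s \<in> D"
      using tb T_subset_D hD_subset_D lsubspace_add[OF D_lsubspace] by blast
    then have "r \<in> D"
      using W.lsubspace_diff[OF D_lsubspace \<open>x - y \<in> D\<close>] sr(1) by (metis add_diff_cancel_left')
    then have "b + r \<in> C_next"
      unfolding C_next_def ssum_def using tb sr by blast
    moreover have "y + t \<in> W1_level (Suc k)"
      using lsubspace_add[OF W1_level_lsubspace y] tb T_subset_W1_level by blast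
    moreover have "x = (y + t) + (b + r)"
      using sr tb by (simp add: algebra_simps)
    ultimately show "x \<in> ssum (W1_level (Suc k)) C_next"
      unfolding ssum_def by blast
  qed
qed

lemma C_next_level_complement: "level_complement (Suc k) C_next"
  unfolding level_complement_def
  using C_next_subset_D D_subset C_next_lsubspace C_next_Ylevel C_next_hmul
    W1_level_inter_C_next C_next_span
  by blast

lemma trunc_C_next: "trunc k ` C_next \<subseteq> C"
  using C_next_subset_D by (auto simp: D_def)

end

context complement_setting
begin

lemma level_complement_lift:
  assumes "level_complement k C"
  shows "\<exists>C'. level_complement (Suc k) C' \<and> trunc k ` C' \<subseteq> C"
proof -
  interpret complement_lift sc0W sc0V Y0 vac0 YW W1 k C
    by unfold_locales (fact assms)
  show ?thesis
    using C_next_level_complement trunc_C_next by blast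
qed

end

context complement_setting
begin

lemma level_complement_subset: "level_complement k C \<Longrightarrow> C \<subseteq> hbelow k"
  unfolding level_complement_def by blast

lemma level_complement_component_unique:
  assumes C: "level_complement k C"
    and "b \<in> C" "x - b \<in> W1_level k" "b' \<in> C" "x - b' \<in> W1_level k"
  shows "b = b'"
proof -
  have C_lsubspace: "lsubspace (pscale sc0W) C" and C_inter: "W1_level k \<inter> C = {0}"
    using C by (auto simp: level_complement_def)
  have "(x - b') - (x - b) \<in> W1_level k"
    using W.lsubspace_diff[OF W1_level_lsubspace] assms by blast
  moreover have "b - b' \<in> C"
    using W.lsubspace_diff[OF C_lsubspace] assms by blast
  moreover have "(x - b') - (x - b) = b - b'"
    by simp
  ultimately have "b - b' \<in> W1_level k \<inter> C"
    by simp
  then show ?thesis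
    using C_inter by simp
qed

primrec complements :: "nat \<Rightarrow> (nat \<Rightarrow> 'w) set" where
  "complements 0 = {0}"
| "complements (Suc k) = (SOME C. level_complement (Suc k) C \<and> trunc k ` C \<subseteq> complements k)"

lemma complements_Suc:
  assumes "level_complement k (complements k)"
  shows "level_complement (Suc k) (complements (Suc k)) \<and> trunc k ` complements (Suc k) \<subseteq> complements k"
  unfolding complements.simps(2) by (rule someI_ex[OF level_complement_lift[OF assms]])

lemma complements_level_complement: "level_complement k (complements k)"
proof (induction k)
  case (Suc k)
  then show ?case
    using complements_Suc by blast
qed (simp add: level_complement_0)

lemma trunc_complements: "k \<le> j \<Longrightarrow> x \<in> complements j \<Longrightarrow> trunc k x \<in> complements k"
proof (induction j arbitrary: x rule: dec_induct)
  case base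
  then show ?case
    using level_complement_subset[OF complements_level_complement, of k] hbelow_iff_trunc
    by (metis subsetD)
next
  case (step j)
  then have "trunc k (trunc j x) \<in> complements k"
    using complements_Suc[OF complements_level_complement] by blast
  then show ?case
    using step.hyps trunc_trunc by metis
qed

definition W2 :: "(nat \<Rightarrow> 'w) set" where
  "W2 = {w. \<forall>k. trunc k w \<in> complements k}"

lemma complements_lsubspace: "lsubspace (pscale sc0W) (complements k)"
  and complements_hmul: "x \<in> complements k \<Longrightarrow> hmul k f x \<in> complements k"
  and W1_level_inter_complements: "W1_level k \<inter> complements k = {0}"
  and complements_span: "hbelow k = ssum (W1_level k) (complements k)"
  using complements_level_complement[of k] by (auto simp: level_complement_def)

lemma W2_zero: "0 \<in> W2"
  unfolding W2_def using lsubspace_zero[OF complements_lsubspace] by simp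

lemma W2_add: "a \<in> W2 \<Longrightarrow> b \<in> W2 \<Longrightarrow> a + b \<in> W2"
  unfolding W2_def using lsubspace_add[OF complements_lsubspace] by (simp add: trunc_add)

lemma W2_hact:
  assumes "a \<in> W2"
  shows "hact sc0W f a \<in> W2"
proof -
  have "hmul k f (trunc k a) \<in> complements k" for k
    using assms complements_hmul by (simp add: W2_def)
  then show ?thesis
    by (simp add: W2_def hmul_def flip: W.trunc_hact)
qed

lemma W2_YW:
  assumes "a \<in> W2"
  shows "YW u a m \<in> W2"
proof -
  have "trunc k (YW u (trunc k a) m) \<in> complements k" for k
    using assms level_complement_YW_closed[OF complements_level_complement] by (simp add: W2_def)
  then show ?thesis
    by (simp add: W2_def trunc_YW_trunc_right)
qed

lemma W2_uminus: "a \<in> W2 \<Longrightarrow> - a \<in> W2"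
  using W2_hact[of a "hconst (-1)"] by (simp add: W.hact_hconst W.pscale_minus_one)

lemma W2_closed: "hclosure W2 = W2"
  unfolding hclosure_def W2_def by (auto simp: trunc_trunc) (metis dual_order.refl trunc_trunc)

lemma W1_inter_W2: "W1 \<inter> W2 = {0}"
proof
  show "W1 \<inter> W2 \<subseteq> {0}"
  proof
    fix w
    assume w: "w \<in> W1 \<inter> W2"
    have "trunc k w = trunc k 0" for k
      using w W1_level_inter_complements[of k] by (auto simp: W1_level_def W2_def)
    then show "w \<in> {0}"
      using trunc_inject by blast
  qed
qed (use W1_zero W2_zero in simp)

text \<open>The components of the truncations of w in the complements are compatible, so they assemble
  to an element of W_2; the remainder lies in the closure of W_1.\<close>
lemma W1_plus_W2: "\<exists>a b. a \<in> W1 \<and> b \<in> W2 \<and> w = a + b"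
proof -
  define P where "P k b \<longleftrightarrow> b \<in> complements k \<and> trunc k w - b \<in> W1_level k" for k b
  have "\<exists>b. P k b" for k
  proof -
    obtain a c where "trunc k w = a + c" "a \<in> W1_level k" "c \<in> complements k"
      using complements_span[of k] trunc_in_hbelow unfolding ssum_def by blast
    then show ?thesis
      unfolding P_def by (metis add_diff_cancel_right')
  qed
  then have P_bs: "P k (bs k)" if "bs = (\<lambda>k. SOME b. P k b)" for bs k
    using that someI_ex by metis
  define bs where "bs = (\<lambda>k. SOME b. P k b)"
  have P_unique: "P k b \<Longrightarrow> P k b' \<Longrightarrow> b = b'" for k b b'
    unfolding P_def using level_complement_component_unique[OF complements_level_complement] by blast
  have "P k (trunc k (bs (Suc k)))" for k
    using P_bs[OF bs_def, of "Suc k"] trunc_complements[of k "Suc k"]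
      trunc_W1_level[of k "Suc k" "trunc (Suc k) w - bs (Suc k)"]
    by (auto simp: P_def trunc_diff trunc_trunc)
  then have "trunc k (bs (Suc k)) = bs k" for k
    using P_unique P_bs[OF bs_def] by blast
  moreover have "bs k \<in> hbelow k" for k
    using P_bs[OF bs_def, of k] level_complement_subset[OF complements_level_complement]
    by (auto simp: P_def)
  ultimately obtain b where b: "\<And>k. trunc k b = bs k"
    using trunc_limit_exists by metis
  have "b \<in> W2"
    using P_bs[OF bs_def] by (simp add: W2_def P_def b)
  moreover have "w - b \<in> hclosure W1"
    using P_bs[OF bs_def] unfolding hclosure_def P_def W1_level_def
    by (auto simp: trunc_diff b)
  then have "w - b \<in> W1"
    using W1_closed by simp
  ultimately show ?thesis
    by (metis diff_add_cancel)
qed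

lemma W2_saturated: "hsat W2 = W2"
proof
  show "W2 \<subseteq> hsat W2"
  proof
    fix w
    assume "w \<in> W2"
    then have "hpow 1 w \<in> W2"
      using W2_hact[of w "hmon 1"] by (simp add: W.hact_hmon)
    then show "w \<in> hsat W2"
      by (auto simp: hsat_def)
  qed
next
  show "hsat W2 \<subseteq> W2"
  proof
    fix w
    assume "w \<in> hsat W2"
    then obtain n where n: "hpow n w \<in> W2"
      by (auto simp: hsat_def)
    obtain a b where ab: "a \<in> W1" "b \<in> W2" "w = a + b"
      using W1_plus_W2 by blast
    have "hpow n a \<in> W1"
      using W1_hact[OF ab(1), of "hmon n"] by (simp add: W.hact_hmon)
    moreover have "hpow n a = hpow n w + - hpow n b"
      using ab(3) by (simp add: hpow_add)
    then have "hpow n a \<in> W2"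
      using W2_add[OF n W2_uminus] W2_hact[OF ab(2), of "hmon n"] by (simp add: W.hact_hmon)
    ultimately have "hpow n a = 0"
      using W1_inter_W2 by blast
    then show "w \<in> W2"
      using ab by (simp add: hpow_eq_0_iff)
  qed
qed

lemma W2_hsubmodule: "hsubmodule sc0W YW W2"
  unfolding hsubmodule_def using W2_zero W2_add W2_hact W2_YW W2_closed W2_saturated by blast

end

theorem lemma3p6:
  fixes sc0V :: "complex \<Rightarrow> 'v0 \<Rightarrow> 'v0::ab_group_add"
    and Y0 :: "'v0 \<Rightarrow> 'v0 \<Rightarrow> int \<Rightarrow> 'v0"
    and vac0 :: "'v0"
    and sc0W :: "complex \<Rightarrow> 'w0 \<Rightarrow> 'w0::ab_group_add"
    and YW :: "(nat \<Rightarrow> 'v0) \<Rightarrow> (nat \<Rightarrow> 'w0) \<Rightarrow> int \<Rightarrow> (nat \<Rightarrow> 'w0)"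
  assumes V0_vs: "vector_space sc0V"
    and V0_nlva: "nlva sc0V UNIV Y0 vac0"
    and W0_vs: "vector_space sc0W"
    and V0_cr: "\<forall>(M :: (nat \<Rightarrow> 'w0) set) YM.
                  nlva_module sc0V (pscale sc0W) UNIV Y0 vac0 M YM \<longrightarrow>
                  completely_reducible (pscale sc0W) UNIV YM M"
    and W_mod: "hadic_module sc0V sc0W Y0 vac0 YW"
  shows "hadic_completely_reducible sc0W YW"
  unfolding hadic_completely_reducible_def
proof (intro allI impI)
  fix W1
  assume "hsubmodule sc0W YW W1"
  moreover have "complex_module sc0W" "complex_module sc0V"
    using W0_vs V0_vs by (simp_all add: complex_module_def module_iff_vector_space)
  ultimately interpret complement_setting sc0W sc0V Y0 vac0 YW W1
    unfolding complement_setting_def complement_setting_axioms_def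
      hadic_module_setting_def hadic_module_setting_axioms_def
    using V0_nlva V0_cr W_mod by blast
  show "\<exists>W2. hsubmodule sc0W YW W2 \<and> W1 \<inter> W2 = {0} \<and> UNIV = {a + b | a b. a \<in> W1 \<and> b \<in> W2}"
    using W2_hsubmodule W1_inter_W2 W1_plus_W2 by blast
qed

end
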